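(* $o(\mathsf{T_f}(1))=\omega$.
   Context: $1$ denotes the one-element quasi-order $\{0\}$. Trees: for a non-empty quasi-order $Q$, $\mathsf{T_f}(Q)$ is the smallest class containing the leaf $\cdot q$ for each $q\in Q$, and containing $\cdot(\tau_0,\dots,\tau_{k-1})$ (an unlabelled root whose children are the $\tau_i$) for every finite set $\{\tau_0,\dots,\tau_{k-1}\}\subseteq\mathsf{T_f}(Q)$ with $k\ge1$. Its order $\le_T$ is defined recursively: - $\cdot x\le_T\cdot y$ iff $x\le_Q y$; - $\cdot x\le_T\cdot(\tau_j)_{j<l}$ iff $\cdot x\le_T\tau_j$ for some $j$; - $\cdot(\sigma_i)_{i<k}\le_T\cdot(\tau_j)_{j<l}$ iff every $\sigma_i$ is $\le_T$ some $\tau_j$; - a non-leaf tree is never $\le_T$ a leaf. For a well-quasi-order $P$, $o(P)$ is the supremum of the order types of linearizations of $P$, i.e. linear quasi-orders on the same set extending its order. *)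

theory Defs
  imports Main "HOL-Library.FSet"
begin

datatype 'a tree = Leaf 'a | Node "'a tree fset"

inductive in_Tf :: "'a set \<Rightarrow> 'a tree \<Rightarrow> bool" for Q :: "'a set" where
  "x \<in> Q \<Longrightarrow> in_Tf Q (Leaf x)"
| "ts \<noteq> {||} \<Longrightarrow> (\<forall>t\<in>fset ts. in_Tf Q t) \<Longrightarrow> in_Tf Q (Node ts)"

definition Tf :: "'a set \<Rightarrow> 'a tree set" where
  "Tf Q = {t. in_Tf Q t}"

inductive tree_le :: "('a \<Rightarrow> 'a \<Rightarrow> bool) \<Rightarrow> 'a tree \<Rightarrow> 'a tree \<Rightarrow> bool"
  for le :: "'a \<Rightarrow> 'a \<Rightarrow> bool" where
  leaf_leaf: "le x y \<Longrightarrow> tree_le le (Leaf x) (Leaf y)"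
| leaf_node: "t \<in> fset ts \<Longrightarrow> tree_le le (Leaf x) t \<Longrightarrow> tree_le le (Leaf x) (Node ts)"
| node_node: "(\<forall>s\<in>fset ss. \<exists>t\<in>fset ts. tree_le le s t) \<Longrightarrow> tree_le le (Node ss) (Node ts)"

text \<open>The one-element quasi-order 1 = {0}, realised on the type unit.\<close>
definition one_carrier :: "unit set" where "one_carrier = {()}"
definition one_le :: "unit \<Rightarrow> unit \<Rightarrow> bool" where "one_le x y = (x = y)"

definition linearization :: "'a set \<Rightarrow> ('a \<Rightarrow> 'a \<Rightarrow> bool) \<Rightarrow> 'a rel \<Rightarrow> bool" where
  "linearization P le L \<longleftrightarrow> L \<subseteq> P \<times> P \<and> refl_on P L \<and> trans L \<and> total_on P L \<and>
     (\<forall>x\<in>P. \<forall>y\<in>P. le x y \<longrightarrow> (x, y) \<in> L)"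

text \<open>The order type of a linear quasi-order L is that of the induced linear order
on the quotient by the equivalence L \<inter> L^-1.\<close>
definition quot_order :: "'a rel \<Rightarrow> 'a set rel" where
  "quot_order L = {(X, Y). X \<in> Field L // (L \<inter> L\<inverse>) \<and> Y \<in> Field L // (L \<inter> L\<inverse>) \<and>
     (\<exists>x\<in>X. \<exists>y\<in>Y. (x, y) \<in> L)}"

text \<open>o(P) = alpha: alpha is the supremum (least upper bound) of the order types of the
linearizations of P (order types compared via the well-order embeddings ordLeq / ordLess).\<close>
definition max_order_type :: "'a set \<Rightarrow> ('a \<Rightarrow> 'a \<Rightarrow> bool) \<Rightarrow> 'b rel \<Rightarrow> bool" where
  "max_order_type P le \<alpha> \<longleftrightarrow>
     (\<forall>L. linearization P le L \<longrightarrow> (quot_order L, \<alpha>) \<in> ordLeq) \<and>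
     (\<forall>\<beta> :: 'b rel. (\<beta>, \<alpha>) \<in> ordLess \<longrightarrow>
        (\<exists>L. linearization P le L \<and> (\<beta>, quot_order L) \<in> ordLess))"

end

theory Submission
  imports Defs
begin

(* In T_f(1) a tree lies below another exactly when its height is not larger, and every height
   is attained (by a path). So a linearization L contains the height preorder; each class of
   L \<inter> L^-1 is then determined by the least height of its members, and comparing these least
   heights is the induced order. The quotient therefore embeds into (nat, \<le>) with finite
   initial segments, so its type is at most \<omega>, while the height preorder itself is a
   linearization of type exactly \<omega>. *)

primrec height :: "'a tree \<Rightarrow> nat" where
  "height (Leaf x) = 0"
| "height (Node ts) = Suc (Max (insert 0 (fset (fimage height ts))))"

lemma height_Node_le_iff: "height (Node ts) \<le> n \<longleftrightarrow> 0 < n \<and> (\<forall>t\<in>fset ts. height t < n)"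
  by (cases n) (auto simp: less_Suc_eq_le)

lemma height_child_less: "t \<in> fset ts \<Longrightarrow> height t < height (Node ts)"
  by (simp add: le_imp_less_Suc)

lemma height_Node_attained:
  assumes "ts \<noteq> {||}"
  obtains t where "t \<in> fset ts" "height (Node ts) = Suc (height t)"
proof -
  have ne: "height ` fset ts \<noteq> {}"
    using assms by (metis bot_fset.rep_eq fset_inject image_is_empty)
  then have "Max (insert 0 (height ` fset ts)) = Max (height ` fset ts)"
    by simp
  moreover have "Max (height ` fset ts) \<in> height ` fset ts"
    using ne by (intro Max_in) auto
  ultimately show thesis
    using that by auto
qed

lemma tree_le_height_mono: "tree_le le s t \<Longrightarrow> height s \<le> height t"
proof (induction rule: tree_le.induct)
  case (node_node ss ts)
  have "height s < height (Node ts)" if "s \<in> fset ss" for s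
    using node_node that by (meson height_child_less le_less_trans)
  then show ?case
    by (simp only: height_Node_le_iff) simp
qed auto

lemma tree_le_one_Leaf: "in_Tf Q t \<Longrightarrow> tree_le one_le (Leaf ()) t"
proof (induction rule: in_Tf.induct)
  case (1 x)
  then show ?case by (simp add: tree_le.leaf_leaf one_le_def)
next
  case (2 ts)
  then obtain t where "t \<in> fset ts" by (metis all_not_fin_conv)
  with 2 show ?case by (auto intro: tree_le.leaf_node)
qed

lemma tree_le_if_height_le:
  fixes Q :: "unit set"
  assumes "in_Tf Q s" "in_Tf Q t" "height s \<le> height t"
  shows "tree_le one_le s t"
  using assms
proof (induction arbitrary: t rule: in_Tf.induct)
  case (1 x)
  then show ?case by (simp add: tree_le_one_Leaf)
next
  case (2 ss t)
  have "t \<noteq> Leaf ()"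
    using "2.prems"(2) by auto
  with "2.prems"(1) obtain ts where t: "t = Node ts" "ts \<noteq> {||}" "\<forall>t\<in>fset ts. in_Tf Q t"
    by cases auto
  then obtain t0 where t0: "t0 \<in> fset ts" "height t = Suc (height t0)"
    using height_Node_attained by metis
  have "\<exists>t'\<in>fset ts. tree_le one_le s t'" if "s \<in> fset ss" for s
  proof -
    have "height s < height t"
      using height_child_less[OF that] "2.prems"(2) by linarith
    then have "tree_le one_le s t0"
      using "2.IH" that t(3) t0 by auto
    then show ?thesis
      using t0(1) by blast
  qed
  then show ?case
    unfolding t(1) by (simp add: tree_le.node_node)
qed

lemma tree_le_one_iff_height_le:
  "s \<in> Tf one_carrier \<Longrightarrow> t \<in> Tf one_carrier \<Longrightarrow> tree_le one_le s t \<longleftrightarrow> height s \<le> height t"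
  unfolding Tf_def using tree_le_height_mono tree_le_if_height_le by blast

lemma image_height_Tf_one: "height ` Tf one_carrier = UNIV"
proof -
  define path :: "nat \<Rightarrow> unit tree" where "path n = ((\<lambda>t. Node {|t|}) ^^ n) (Leaf ())" for n
  have "in_Tf one_carrier (path n) \<and> height (path n) = n" for n
    unfolding path_def by (induction n) (simp_all add: one_carrier_def in_Tf.intros)
  then show ?thesis
    unfolding Tf_def by (metis UNIV_eq_I image_eqI mem_Collect_eq)
qed

lemma Field_Restr_inv_image_natLeq: "Field (Restr (inv_image natLeq g) C) = C"
  by (auto simp: Field_def natLeq_def)

lemma Well_order_Restr_inv_image_natLeq:
  fixes g :: "'a \<Rightarrow> nat"
  assumes "inj_on g C"
  shows "Well_order (Restr (inv_image natLeq g) C)"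
proof -
  let ?r = "Restr (inv_image natLeq g) C"
  have "refl_on C ?r" "trans ?r" "total_on C ?r"
    unfolding refl_on_def trans_def total_on_def natLeq_def by auto
  moreover have "antisym ?r"
    using assms unfolding antisym_def inj_on_def natLeq_def by auto
  ultimately have "Linear_order ?r"
    unfolding linear_order_on_def partial_order_on_def preorder_on_def
      Field_Restr_inv_image_natLeq by blast
  moreover have "wf (?r - Id)"
  proof (rule wf_subset)
    show "wf (inv_image less_than g)"
      by (rule wf_inv_image[OF wf_less_than])
    show "?r - Id \<subseteq> inv_image less_than g"
    proof
      fix p
      assume "p \<in> ?r - Id"
      then obtain x y where p: "p = (x, y)" "x \<in> C" "y \<in> C" "g x \<le> g y" "x \<noteq> y"
        by (cases p) (simp add: natLeq_def)
      then have "g x \<noteq> g y"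
        using assms inj_onD by metis
      with p show "p \<in> inv_image less_than g"
        by simp
    qed
  qed
  ultimately show ?thesis
    unfolding well_order_on_def by simp
qed

lemma finite_underS_Restr_inv_image_natLeq:
  fixes g :: "'a \<Rightarrow> nat"
  assumes "inj_on g C"
  shows "finite (underS (Restr (inv_image natLeq g) C) x)"
proof (rule finite_subset)
  show "underS (Restr (inv_image natLeq g) C) x \<subseteq> g -` {..<g x} \<inter> C"
    using assms by (auto simp: underS_def natLeq_def inj_on_def le_less)
  show "finite (g -` {..<g x} \<inter> C)"
    using assms by (intro finite_vimage_IntI) auto
qed

lemma Restr_inv_image_natLeq_ordIso:
  fixes g :: "'a \<Rightarrow> nat"
  assumes "bij_betw g C UNIV"
  shows "(Restr (inv_image natLeq g) C, natLeq) \<in> ordIso"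
proof -
  have "iso (Restr (inv_image natLeq g) C) natLeq g"
    unfolding iso_iff2 Field_Restr_inv_image_natLeq Field_natLeq
    using assms by (auto simp: natLeq_def)
  then show ?thesis
    using assms Well_order_Restr_inv_image_natLeq natLeq_Well_order
    unfolding ordIso_def bij_betw_def by blast
qed

lemma ordLeq_natLeq_if_finite_underS:
  assumes r: "Well_order r" and fin: "\<And>a. finite (underS r a)"
  shows "(r, natLeq) \<in> ordLeq"
proof (rule ccontr)
  assume "(r, natLeq) \<notin> ordLeq"
  then have "(natLeq, r) \<in> ordLess"
    using not_ordLeq_iff_ordLess r natLeq_Well_order by blast
  then obtain a where "(natLeq, Restr r (underS r a)) \<in> ordIso"
    using ordLess_iff_ordIso_Restr r natLeq_Well_order by blast
  then obtain f :: "nat \<Rightarrow> 'a" where "bij_betw f (Field natLeq) (Field (Restr r (underS r a)))"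
    unfolding ordIso_def iso_def by blast
  moreover have "finite (Field (Restr r (underS r a)))"
    by (rule finite_subset[OF Field_Restr_subset fin])
  ultimately show False
    unfolding Field_natLeq using bij_betw_finite infinite_UNIV_nat by blast
qed

locale graded_quasi_order =
  fixes P :: "'a set" and L :: "'a rel" and d :: "'a \<Rightarrow> nat"
  assumes L_subset: "L \<subseteq> P \<times> P" and refl_L: "refl_on P L" and trans_L: "trans L"
    and graded: "\<And>s t. s \<in> P \<Longrightarrow> t \<in> P \<Longrightarrow> d s \<le> d t \<Longrightarrow> (s, t) \<in> L"
begin

abbreviation classes :: "'a set set" where
  "classes \<equiv> P // (L \<inter> L\<inverse>)"

definition min_grade :: "'a set \<Rightarrow> nat" where
  "min_grade X = Inf (d ` X)"

lemma equiv_classes: "equiv P (L \<inter> L\<inverse>)"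
  using L_subset refl_L trans_L unfolding equiv_def refl_on_def sym_def trans_def by blast

lemma Field_L: "Field L = P"
  using L_subset refl_L unfolding Field_def refl_on_def by auto

lemma classes_subset: "X \<in> classes \<Longrightarrow> X \<subseteq> P"
  by (rule in_quotient_imp_subset[OF equiv_classes])

lemma related_in_class: "X \<in> classes \<Longrightarrow> x \<in> X \<Longrightarrow> y \<in> X \<Longrightarrow> (x, y) \<in> L"
  using in_quotient_imp_in_rel[OF equiv_classes, of X x y] by simp

lemma min_grade_attained:
  assumes "X \<in> classes"
  obtains x where "x \<in> X" "d x = min_grade X"
proof -
  have "d ` X \<noteq> {}"
    using in_quotient_imp_non_empty[OF equiv_classes assms] by simp
  then show thesis
    using that Inf_nat_def1 unfolding min_grade_def by (metis imageE)
qed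

lemma min_grade_le: "x \<in> X \<Longrightarrow> min_grade X \<le> d x"
  unfolding min_grade_def by (simp add: cInf_lower)

lemma related_iff_min_grade_le:
  assumes X: "X \<in> classes" "x \<in> X" and y: "y \<in> P"
  shows "(x, y) \<in> L \<longleftrightarrow> min_grade X \<le> d y"
proof -
  obtain m where m: "m \<in> X" "d m = min_grade X"
    using min_grade_attained X(1) by blast
  have m_P: "m \<in> P"
    using classes_subset X(1) m(1) by blast
  have m_x: "(m, x) \<in> L" and x_m: "(x, m) \<in> L"
    using related_in_class X m(1) by auto
  show ?thesis
  proof
    assume xy: "(x, y) \<in> L"
    show "min_grade X \<le> d y"
    proof (rule ccontr)
      assume "\<not> min_grade X \<le> d y"
      then have "(y, m) \<in> L"
        using graded[OF y m_P] m(2) by simp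
      then have "(y, x) \<in> L"
        using m_x trans_L by (meson transD)
      then have "y \<in> X"
        using in_quotient_imp_closed[OF equiv_classes X] xy by blast
      then show False
        using min_grade_le \<open>\<not> min_grade X \<le> d y\<close> by blast
    qed
  next
    assume "min_grade X \<le> d y"
    then have "(m, y) \<in> L"
      using graded[OF m_P y] m(2) by simp
    then show "(x, y) \<in> L"
      using x_m trans_L by (meson transD)
  qed
qed

lemma inj_on_min_grade: "inj_on min_grade classes"
proof (rule inj_onI)
  fix X Y
  assume X: "X \<in> classes" and Y: "Y \<in> classes" and eq: "min_grade X = min_grade Y"
  obtain x where x: "x \<in> X" "d x = min_grade X"
    using min_grade_attained X by blast
  obtain y where y: "y \<in> Y" "d y = min_grade Y"
    using min_grade_attained Y by blast
  have "x \<in> P" "y \<in> P"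
    using classes_subset X Y x(1) y(1) by blast+
  then have "(x, y) \<in> L" "(y, x) \<in> L"
    using related_iff_min_grade_le X Y x y eq by simp_all
  then show "X = Y"
    using quotient_eq_iff[OF equiv_classes X Y x(1) y(1)] by blast
qed

lemma related_classes_iff:
  assumes X: "X \<in> classes" and Y: "Y \<in> classes"
  shows "(\<exists>x\<in>X. \<exists>y\<in>Y. (x, y) \<in> L) \<longleftrightarrow> min_grade X \<le> min_grade Y"
proof -
  obtain m where m: "m \<in> Y" "d m = min_grade Y"
    using min_grade_attained Y by blast
  have m_P: "m \<in> P"
    using classes_subset Y m(1) by blast
  have "(\<exists>x\<in>X. \<exists>y\<in>Y. (x, y) \<in> L) \<longleftrightarrow> (\<exists>x\<in>X. (x, m) \<in> L)"
    using related_in_class[OF Y _ m(1)] trans_L m(1) by (meson transD)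
  also have "\<dots> \<longleftrightarrow> min_grade X \<le> min_grade Y"
    using related_iff_min_grade_le[OF X _ m_P] m(2) min_grade_attained[OF X] by metis
  finally show ?thesis .
qed

lemma quot_order_eq: "quot_order L = Restr (inv_image natLeq min_grade) classes"
proof -
  have "(X, Y) \<in> quot_order L \<longleftrightarrow> (X, Y) \<in> Restr (inv_image natLeq min_grade) classes" for X Y
  proof -
    have "(X, Y) \<in> quot_order L \<longleftrightarrow>
        X \<in> classes \<and> Y \<in> classes \<and> (\<exists>x\<in>X. \<exists>y\<in>Y. (x, y) \<in> L)"
      unfolding quot_order_def Field_L by simp
    also have "\<dots> \<longleftrightarrow> X \<in> classes \<and> Y \<in> classes \<and> min_grade X \<le> min_grade Y"
      using related_classes_iff by blast
    also have "\<dots> \<longleftrightarrow> (X, Y) \<in> Restr (inv_image natLeq min_grade) classes"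
      by (auto simp: natLeq_def)
    finally show ?thesis .
  qed
  then show ?thesis
    by (intro set_eqI) (metis surj_pair)
qed

lemma quot_order_ordLeq_natLeq: "(quot_order L, natLeq) \<in> ordLeq"
  unfolding quot_order_eq using inj_on_min_grade
  by (intro ordLeq_natLeq_if_finite_underS Well_order_Restr_inv_image_natLeq
      finite_underS_Restr_inv_image_natLeq)

lemma quot_order_ordIso_natLeq:
  assumes "min_grade ` classes = UNIV"
  shows "(quot_order L, natLeq) \<in> ordIso"
  unfolding quot_order_eq using inj_on_min_grade assms
  by (intro Restr_inv_image_natLeq_ordIso) (simp add: bij_betw_def)

end

lemma graded_quasi_order_linearization:
  assumes "linearization P le L"
    and "\<And>s t. s \<in> P \<Longrightarrow> t \<in> P \<Longrightarrow> d s \<le> d t \<Longrightarrow> le s t"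
  shows "graded_quasi_order P L d"
  using assms unfolding linearization_def graded_quasi_order_def by blast

lemma linearization_Restr_inv_image_natLeq:
  fixes d :: "'a \<Rightarrow> nat"
  assumes "\<And>x y. x \<in> P \<Longrightarrow> y \<in> P \<Longrightarrow> le x y \<Longrightarrow> d x \<le> d y"
  shows "linearization P le (Restr (inv_image natLeq d) P)"
  using assms unfolding linearization_def refl_on_def trans_def total_on_def natLeq_def
  by auto

lemma quot_order_Restr_inv_image_natLeq_ordIso:
  fixes d :: "'a \<Rightarrow> nat"
  assumes surj: "d ` P = UNIV"
  shows "(quot_order (Restr (inv_image natLeq d) P), natLeq) \<in> ordIso"
proof -
  let ?L = "Restr (inv_image natLeq d) P"
  interpret graded_quasi_order P ?L d
    by unfold_locales (auto simp: refl_on_def trans_def natLeq_def)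
  have "n \<in> min_grade ` classes" for n
  proof -
    obtain x where x: "x \<in> P" "d x = n"
      using surj by (metis UNIV_I imageE)
    let ?X = "(?L \<inter> ?L\<inverse>) `` {x}"
    have "d ` ?X = {n}"
      using x by (auto simp: natLeq_def)
    then have "min_grade ?X = n"
      by (simp add: min_grade_def)
    moreover have "?X \<in> classes"
      using x(1) by (rule quotientI)
    ultimately show ?thesis
      by (rule image_eqI[OF sym])
  qed
  then show ?thesis
    by (intro quot_order_ordIso_natLeq) auto
qed

theorem lemma3p12:
  shows "max_order_type (Tf one_carrier) (tree_le one_le) natLeq"
proof -
  let ?P = "Tf one_carrier"
  let ?L\<^sub>0 = "Restr (inv_image natLeq height) ?P"
  have le_iff: "tree_le one_le s t \<longleftrightarrow> height s \<le> height t" if "s \<in> ?P" "t \<in> ?P" for s t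
    using tree_le_one_iff_height_le that .
  have "(quot_order L, natLeq) \<in> ordLeq" if "linearization ?P (tree_le one_le) L" for L
    using graded_quasi_order_linearization[OF that, of height] le_iff
    by (simp add: graded_quasi_order.quot_order_ordLeq_natLeq)
  moreover have "linearization ?P (tree_le one_le) ?L\<^sub>0"
    using le_iff by (intro linearization_Restr_inv_image_natLeq) auto
  moreover have "(quot_order ?L\<^sub>0, natLeq) \<in> ordIso"
    using image_height_Tf_one by (rule quot_order_Restr_inv_image_natLeq_ordIso)
  ultimately show ?thesis
    unfolding max_order_type_def using ordLess_ordIso_trans ordIso_symmetric by blast
qed

end
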